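(* Let $n\ge1$ and fix $\beta\in\partial\mathbb{D}$. On the manifold $\mathbb{D}^{n-1}$ of Verblunsky coefficients $(\alpha_0,\dots,\alpha_{n-2})$ with the Poisson bracket described in the context, let $P_n,Q_n,C_n,S_n$ be as in the context. Then for all $z,w$: \[ \{C_n(z),C_n(w)\}=0=\{S_n(z),S_n(w)\},\qquad \{C_n(z),S_n(w)\}=-i\,\frac{C_n(z)\,wS_n(w)-C_n(w)\,zS_n(z)}{z-w}, \] \[ \{P_n(z),P_n(w)\}=0=\{Q_n(z),Q_n(w)\}, \] \[ \{P_n(z),Q_n(w)\}=-\frac{i}{2}\Bigl[\bigl(P_n(z)Q_n(w)-P_n(w)Q_n(z)\bigr)\frac{z+w}{z-w}-Q_n(z)Q_n(w)+P_n(z)P_n(w)\Bigr]. \]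
   Context: Let $\rho_j=(1-|\alpha_j|^2)^{1/2}$. The Poisson bracket of (complex-valued) smooth functions of $\alpha_0,\dots,\alpha_{n-2}$ is $\{f,g\}=\sum_{j=0}^{n-2}i\rho_j^2\bigl(\frac{\partial f}{\partial\bar\alpha_j}\frac{\partial g}{\partial\alpha_j}-\frac{\partial f}{\partial\alpha_j}\frac{\partial g}{\partial\bar\alpha_j}\bigr)$ with Wirtinger derivatives; equivalently $\{\alpha_j,\alpha_k\}=\{\bar\alpha_j,\bar\alpha_k\}=0$, $\{\alpha_j,\bar\alpha_k\}=-i\rho_j^2\delta_{jk}$. Auxiliary variables $z,w$ are held fixed. The monic OPUC satisfy $\Phi_0=1$, $\Phi_{k+1}(z)=z\Phi_k(z)-\bar\alpha_k\Phi_k^*(z)$ with $\Phi_k^*(z)=z^k\overline{\Phi_k(1/\bar z)}$; $\Psi_k$ satisfies the same recursion with $\alpha_j$ replaced by $-\alpha_j$. Then $P_n(z)=z\Phi_{n-1}(z)-\bar\beta\Phi_{n-1}^*(z)$, $Q_n(z)=z\Psi_{n-1}(z)+\bar\beta\Psi_{n-1}^*(z)$, $C_n=\tfrac12(P_n+Q_n)$, $S_n=\tfrac12(P_n-Q_n)$. Identities with difference quotients are identities of polynomials in $z,w$. *)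

theory Defs
  imports "HOL-Analysis.Analysis" "HOL-Computational_Algebra.Polynomial"
begin

text \<open>Reversed polynomial: p^*(z) = z^k conj(p(1/conj z)), written coefficientwise
  (valid as a polynomial identity for deg p \<le> k).\<close>
definition opuc_star :: "nat \<Rightarrow> complex poly \<Rightarrow> complex poly" where
  "opuc_star k p = (\<Sum>m\<le>k. monom (cnj (coeff p (k - m))) m)"

fun Phi :: "(nat \<Rightarrow> complex) \<Rightarrow> nat \<Rightarrow> complex poly" where
  "Phi a 0 = 1"
| "Phi a (Suc k) = pCons 0 (Phi a k) - smult (cnj (a k)) (opuc_star k (Phi a k))"

definition Psi :: "(nat \<Rightarrow> complex) \<Rightarrow> nat \<Rightarrow> complex poly" where
  "Psi a k = Phi (\<lambda>j. - a j) k"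

definition Pn :: "nat \<Rightarrow> complex \<Rightarrow> (nat \<Rightarrow> complex) \<Rightarrow> complex poly" where
  "Pn n \<beta> a = pCons 0 (Phi a (n - 1)) - smult (cnj \<beta>) (opuc_star (n - 1) (Phi a (n - 1)))"

definition Qn :: "nat \<Rightarrow> complex \<Rightarrow> (nat \<Rightarrow> complex) \<Rightarrow> complex poly" where
  "Qn n \<beta> a = pCons 0 (Psi a (n - 1)) + smult (cnj \<beta>) (opuc_star (n - 1) (Psi a (n - 1)))"

definition Cn :: "nat \<Rightarrow> complex \<Rightarrow> (nat \<Rightarrow> complex) \<Rightarrow> complex poly" where
  "Cn n \<beta> a = smult (1/2) (Pn n \<beta> a + Qn n \<beta> a)"

definition Sn :: "nat \<Rightarrow> complex \<Rightarrow> (nat \<Rightarrow> complex) \<Rightarrow> complex poly" where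
  "Sn n \<beta> a = smult (1/2) (Pn n \<beta> a - Qn n \<beta> a)"

definition dRe :: "nat \<Rightarrow> ((nat \<Rightarrow> complex) \<Rightarrow> complex) \<Rightarrow> (nat \<Rightarrow> complex) \<Rightarrow> complex" where
  "dRe j f a = vector_derivative (\<lambda>t::real. f (a(j := a j + complex_of_real t))) (at 0)"

definition dIm :: "nat \<Rightarrow> ((nat \<Rightarrow> complex) \<Rightarrow> complex) \<Rightarrow> (nat \<Rightarrow> complex) \<Rightarrow> complex" where
  "dIm j f a = vector_derivative (\<lambda>t::real. f (a(j := a j + \<i> * complex_of_real t))) (at 0)"

definition wirt :: "nat \<Rightarrow> ((nat \<Rightarrow> complex) \<Rightarrow> complex) \<Rightarrow> (nat \<Rightarrow> complex) \<Rightarrow> complex" where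
  "wirt j f a = (dRe j f a - \<i> * dIm j f a) / 2"

definition wirt_bar :: "nat \<Rightarrow> ((nat \<Rightarrow> complex) \<Rightarrow> complex) \<Rightarrow> (nat \<Rightarrow> complex) \<Rightarrow> complex" where
  "wirt_bar j f a = (dRe j f a + \<i> * dIm j f a) / 2"

definition pbracket :: "nat \<Rightarrow> ((nat \<Rightarrow> complex) \<Rightarrow> complex) \<Rightarrow> ((nat \<Rightarrow> complex) \<Rightarrow> complex)
    \<Rightarrow> (nat \<Rightarrow> complex) \<Rightarrow> complex" where
  "pbracket n f g a = (\<Sum>j<n - 1. \<i> * complex_of_real (1 - (cmod (a j))\<^sup>2) *
      (wirt_bar j f a * wirt j g a - wirt j f a * wirt_bar j g a))"

end

theory Submission
  imports Defs
begin

(* Write the Szego recursion as (Phi_{k+1}, Phi_{k+1}^* ) = M_k(z) (Phi_k, Phi_k^* ) with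
   M_k(z) = [[z, -conj a_k], [-a_k z, 1]], and let T_k(z) = M_{k-1}(z) ... M_0(z).
   Setting a_{n-1} := beta, the first row of T_n(z) is (C_n(z), S_n(z)), and P_n, Q_n are its
   sum and difference.  Each entry of T_k is affine in a_j and in conj a_j, so its Wirtinger
   derivatives are obtained by differentiating a single factor.  Since M_k involves only a_k,
   induction on k shows that the brackets of the entries of T_k(z) and T_k(w) obey a quadratic
   r-matrix relation; its first-row part yields all six identities.  The coordinate
   a_{n-1} = beta contributes nothing because its weight 1 - |beta|^2 vanishes. *)

(* Matrices are functions bool => bool => complex; index False stands for Phi_k, True for Phi_k^*. *)
definition szego_matrix :: "(nat \<Rightarrow> complex) \<Rightarrow> nat \<Rightarrow> complex \<Rightarrow> bool \<Rightarrow> bool \<Rightarrow> complex" where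
  "szego_matrix a k z p r =
     (if p then (if r then 1 else - a k * z) else (if r then - cnj (a k) else z))"

fun transfer :: "(nat \<Rightarrow> complex) \<Rightarrow> nat \<Rightarrow> complex \<Rightarrow> bool \<Rightarrow> bool \<Rightarrow> complex" where
  "transfer a 0 z p q = (if p = q then 1 else 0)"
| "transfer a (Suc k) z p q =
     szego_matrix a k z p False * transfer a k z False q + szego_matrix a k z p True * transfer a k z True q"

fun transfer_deriv :: "nat \<Rightarrow> (nat \<Rightarrow> complex) \<Rightarrow> nat \<Rightarrow> complex \<Rightarrow> bool \<Rightarrow> bool \<Rightarrow> complex" where
  "transfer_deriv j a 0 z p q = 0"
| "transfer_deriv j a (Suc k) z p q =
     szego_matrix a k z p False * transfer_deriv j a k z False q
   + szego_matrix a k z p True * transfer_deriv j a k z True q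
   + (if j = k \<and> p then - z * transfer a k z False q else 0)"

fun transfer_deriv_cnj :: "nat \<Rightarrow> (nat \<Rightarrow> complex) \<Rightarrow> nat \<Rightarrow> complex \<Rightarrow> bool \<Rightarrow> bool \<Rightarrow> complex" where
  "transfer_deriv_cnj j a 0 z p q = 0"
| "transfer_deriv_cnj j a (Suc k) z p q =
     szego_matrix a k z p False * transfer_deriv_cnj j a k z False q
   + szego_matrix a k z p True * transfer_deriv_cnj j a k z True q
   + (if j = k \<and> \<not> p then - transfer a k z True q else 0)"

definition transfer_bracket_term ::
    "nat \<Rightarrow> (nat \<Rightarrow> complex) \<Rightarrow> nat \<Rightarrow> complex \<Rightarrow> complex \<Rightarrow> bool \<Rightarrow> bool \<Rightarrow> bool \<Rightarrow> bool \<Rightarrow> complex" where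
  "transfer_bracket_term j a k z w p q p' q' = \<i> * (1 - a j * cnj (a j)) *
     (transfer_deriv_cnj j a k z p q * transfer_deriv j a k w p' q'
      - transfer_deriv j a k z p q * transfer_deriv_cnj j a k w p' q')"

definition transfer_bracket ::
    "(nat \<Rightarrow> complex) \<Rightarrow> nat \<Rightarrow> complex \<Rightarrow> complex \<Rightarrow> bool \<Rightarrow> bool \<Rightarrow> bool \<Rightarrow> bool \<Rightarrow> complex" where
  "transfer_bracket a k z w p q p' q' = (\<Sum>j<k. transfer_bracket_term j a k z w p q p' q')"

definition levi_civita :: "bool \<Rightarrow> bool \<Rightarrow> complex" where
  "levi_civita q q' = (if \<not> q \<and> q' then 1 else if q \<and> \<not> q' then -1 else 0)"

definition rmatrix_bracket :: "(bool \<Rightarrow> bool \<Rightarrow> complex) \<Rightarrow> (bool \<Rightarrow> bool \<Rightarrow> complex)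
    \<Rightarrow> complex \<Rightarrow> complex \<Rightarrow> bool \<Rightarrow> bool \<Rightarrow> bool \<Rightarrow> bool \<Rightarrow> complex" where
  "rmatrix_bracket U V z w p q p' q' =
     (if \<not> p \<and> p' then \<i> * w * (U False q * V True q' - U True q * V False q') else 0)
   + (if p \<and> \<not> p' then \<i> * z * (U True q * V False q' - U False q * V True q') else 0)
   - \<i> * levi_civita q q' * (w * U p False * V p' True - z * U p True * V p' False)"

lemma transfer_deriv_ge: "k \<le> j \<Longrightarrow> transfer_deriv j a k z p q = 0"
  by (induction k arbitrary: p q) auto

lemma transfer_deriv_cnj_ge: "k \<le> j \<Longrightarrow> transfer_deriv_cnj j a k z p q = 0"
  by (induction k arbitrary: p q) auto

lemma transfer_bracket_term_Suc:
  assumes "j < k"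
  shows "transfer_bracket_term j a (Suc k) z w p q p' q' =
     szego_matrix a k z p False * szego_matrix a k w p' False * transfer_bracket_term j a k z w False q False q'
   + szego_matrix a k z p False * szego_matrix a k w p' True * transfer_bracket_term j a k z w False q True q'
   + szego_matrix a k z p True * szego_matrix a k w p' False * transfer_bracket_term j a k z w True q False q'
   + szego_matrix a k z p True * szego_matrix a k w p' True * transfer_bracket_term j a k z w True q True q'"
  using assms unfolding transfer_bracket_term_def by (simp add: algebra_simps)

lemma transfer_bracket_Suc:
  "transfer_bracket a (Suc k) z w p q p' q' =
     szego_matrix a k z p False * szego_matrix a k w p' False * transfer_bracket a k z w False q False q'
   + szego_matrix a k z p False * szego_matrix a k w p' True * transfer_bracket a k z w False q True q'
   + szego_matrix a k z p True * szego_matrix a k w p' False * transfer_bracket a k z w True q False q'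
   + szego_matrix a k z p True * szego_matrix a k w p' True * transfer_bracket a k z w True q True q'
   + transfer_bracket_term k a (Suc k) z w p q p' q'"
proof -
  have "(\<Sum>j<k. transfer_bracket_term j a (Suc k) z w p q p' q') = (\<Sum>j<k.
     szego_matrix a k z p False * szego_matrix a k w p' False * transfer_bracket_term j a k z w False q False q'
   + szego_matrix a k z p False * szego_matrix a k w p' True * transfer_bracket_term j a k z w False q True q'
   + szego_matrix a k z p True * szego_matrix a k w p' False * transfer_bracket_term j a k z w True q False q'
   + szego_matrix a k z p True * szego_matrix a k w p' True * transfer_bracket_term j a k z w True q True q')"
    by (rule sum.cong) (simp_all add: transfer_bracket_term_Suc)
  then show ?thesis
    unfolding transfer_bracket_def by (simp add: sum.distrib sum_distrib_left)
qed

lemma transfer_bracket_rmatrix: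
  "(z - w) * transfer_bracket a k z w p q p' q'
     = rmatrix_bracket (transfer a k z) (transfer a k w) z w p q p' q'"
proof (induction k arbitrary: p q p' q')
  case 0
  show ?case
    by (cases p; cases q; cases p'; cases q')
      (simp_all add: transfer_bracket_def rmatrix_bracket_def levi_civita_def)
next
  case (Suc k)
  have new: "transfer_bracket_term k a (Suc k) z w p q p' q' = \<i> * (1 - a k * cnj (a k)) *
     ((if p then 0 else - transfer a k z True q) * (if p' then - w * transfer a k w False q' else 0)
    - (if p then - z * transfer a k z False q else 0) * (if p' then 0 else - transfer a k w True q'))"
    unfolding transfer_bracket_term_def by (simp add: transfer_deriv_ge transfer_deriv_cnj_ge)
  show ?case
    unfolding transfer_bracket_Suc distrib_left new mult.left_commute[of "z - w"] Suc.IH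
    by (cases p; cases q; cases p'; cases q')
      (simp_all add: rmatrix_bracket_def levi_civita_def szego_matrix_def algebra_simps)
qed

lemma transfer_upd_ge: "k \<le> j \<Longrightarrow> transfer (a(j := c)) k z p q = transfer a k z p q"
  by (induction k arbitrary: p q) (auto simp: szego_matrix_def)

lemma transfer_upd_affine:
  "transfer (a(j := c)) k z p q = transfer a k z p q
     + (c - a j) * transfer_deriv j a k z p q + cnj (c - a j) * transfer_deriv_cnj j a k z p q"
proof (induction k arbitrary: p q)
  case 0
  show ?case by simp
next
  case (Suc k)
  show ?case
  proof (cases "j = k")
    case True
    then have "transfer (a(j := c)) k z = transfer a k z"
      by (simp add: transfer_upd_ge fun_eq_iff)
    with True show ?thesis
      by (simp add: transfer_deriv_ge transfer_deriv_cnj_ge szego_matrix_def fun_upd_same algebra_simps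
          del: fun_upd_apply)
  next
    case False
    then have "szego_matrix (a(j := c)) k = szego_matrix a k"
      by (simp add: szego_matrix_def fun_eq_iff)
    then show ?thesis
      by (simp only: transfer.simps transfer_deriv.simps transfer_deriv_cnj.simps Suc.IH)
        (simp add: szego_matrix_def False algebra_simps)
  qed
qed

lemma wirt_affine:
  assumes "\<And>x. f (\<alpha>(j := x)) = A + (x - \<alpha> j) * B + cnj (x - \<alpha> j) * C"
  shows "wirt j f \<alpha> = B" and "wirt_bar j f \<alpha> = C"
proof -
  have line_derivative: "vector_derivative (\<lambda>t::real. A + t *\<^sub>R K) (at 0) = K" for K :: complex
    by (rule vector_derivative_at) (auto intro!: derivative_eq_intros)
  have "(\<lambda>t::real. f (\<alpha>(j := \<alpha> j + complex_of_real t))) = (\<lambda>t. A + t *\<^sub>R (B + C))"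
    by (simp add: assms scaleR_conv_of_real algebra_simps)
  then have re: "dRe j f \<alpha> = B + C"
    by (simp only: dRe_def line_derivative)
  have "(\<lambda>t::real. f (\<alpha>(j := \<alpha> j + \<i> * complex_of_real t))) = (\<lambda>t. A + t *\<^sub>R (\<i> * B - \<i> * C))"
    by (simp add: assms scaleR_conv_of_real algebra_simps)
  then have im: "dIm j f \<alpha> = \<i> * B - \<i> * C"
    by (simp only: dIm_def line_derivative)
  show "wirt j f \<alpha> = B" "wirt_bar j f \<alpha> = C"
    unfolding wirt_def wirt_bar_def re im by (simp_all add: algebra_simps)
qed

lemma wirt_first_row:
  assumes "j \<noteq> m"
    and "\<And>a. f a = c1 * transfer (a(m := \<beta>)) k z False False + c2 * transfer (a(m := \<beta>)) k z False True"
  shows "wirt j f \<alpha> = c1 * transfer_deriv j (\<alpha>(m := \<beta>)) k z False False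
                       + c2 * transfer_deriv j (\<alpha>(m := \<beta>)) k z False True"
    and "wirt_bar j f \<alpha> = c1 * transfer_deriv_cnj j (\<alpha>(m := \<beta>)) k z False False
                           + c2 * transfer_deriv_cnj j (\<alpha>(m := \<beta>)) k z False True"
proof -
  have "(\<alpha>(j := x))(m := \<beta>) = (\<alpha>(m := \<beta>))(j := x)" for x
    using assms(1) by (rule fun_upd_twist)
  moreover have "(\<alpha>(m := \<beta>)) j = \<alpha> j"
    using assms(1) by simp
  ultimately have "f (\<alpha>(j := x)) = (c1 * transfer (\<alpha>(m := \<beta>)) k z False False
         + c2 * transfer (\<alpha>(m := \<beta>)) k z False True)
     + (x - \<alpha> j) * (c1 * transfer_deriv j (\<alpha>(m := \<beta>)) k z False False
         + c2 * transfer_deriv j (\<alpha>(m := \<beta>)) k z False True)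
     + cnj (x - \<alpha> j) * (c1 * transfer_deriv_cnj j (\<alpha>(m := \<beta>)) k z False False
         + c2 * transfer_deriv_cnj j (\<alpha>(m := \<beta>)) k z False True)" for x
    by (simp add: assms(2) transfer_upd_affine algebra_simps)
  then show "wirt j f \<alpha> = c1 * transfer_deriv j (\<alpha>(m := \<beta>)) k z False False
                       + c2 * transfer_deriv j (\<alpha>(m := \<beta>)) k z False True"
    and "wirt_bar j f \<alpha> = c1 * transfer_deriv_cnj j (\<alpha>(m := \<beta>)) k z False False
                           + c2 * transfer_deriv_cnj j (\<alpha>(m := \<beta>)) k z False True"
    by (rule wirt_affine)+
qed

lemma pbracket_self: "pbracket n f f a = 0"
  by (simp add: pbracket_def mult.commute)

lemma pbracket_first_row_entries:
  assumes "cmod \<beta> = 1"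
    and f: "\<And>a. f a = c1 * transfer (a(m := \<beta>)) (Suc m) z False False
                     + c2 * transfer (a(m := \<beta>)) (Suc m) z False True"
    and g: "\<And>a. g a = d1 * transfer (a(m := \<beta>)) (Suc m) w False False
                     + d2 * transfer (a(m := \<beta>)) (Suc m) w False True"
  shows "pbracket (Suc m) f g \<alpha>
    = c1 * d1 * transfer_bracket (\<alpha>(m := \<beta>)) (Suc m) z w False False False False
    + c1 * d2 * transfer_bracket (\<alpha>(m := \<beta>)) (Suc m) z w False False False True
    + c2 * d1 * transfer_bracket (\<alpha>(m := \<beta>)) (Suc m) z w False True False False
    + c2 * d2 * transfer_bracket (\<alpha>(m := \<beta>)) (Suc m) z w False True False True"
proof -
  define a' where "a' = \<alpha>(m := \<beta>)"
  define b where "b j = c1 * d1 * transfer_bracket_term j a' (Suc m) z w False False False False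
    + c1 * d2 * transfer_bracket_term j a' (Suc m) z w False False False True
    + c2 * d1 * transfer_bracket_term j a' (Suc m) z w False True False False
    + c2 * d2 * transfer_bracket_term j a' (Suc m) z w False True False True" for j
  have "pbracket (Suc m) f g \<alpha> = (\<Sum>j<m. b j)"
    unfolding pbracket_def diff_Suc_1
  proof (rule sum.cong)
    fix j
    assume "j \<in> {..<m}"
    then have "j \<noteq> m" by simp
    moreover have "complex_of_real (1 - (cmod (\<alpha> j))\<^sup>2) = 1 - a' j * cnj (a' j)"
      using \<open>j \<noteq> m\<close> complex_norm_square[of "\<alpha> j"] by (simp add: a'_def)
    ultimately show "\<i> * complex_of_real (1 - (cmod (\<alpha> j))\<^sup>2)
        * (wirt_bar j f \<alpha> * wirt j g \<alpha> - wirt j f \<alpha> * wirt_bar j g \<alpha>) = b j"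
      by (simp add: wirt_first_row[OF _ f] wirt_first_row[OF _ g] b_def
          transfer_bracket_term_def a'_def algebra_simps)
  qed simp
  also have "\<dots> = (\<Sum>j<Suc m. b j)"
  proof -
    have "\<beta> * cnj \<beta> = 1"
      using assms(1) complex_norm_square[of \<beta>] by simp
    then show ?thesis
      by (simp add: b_def transfer_bracket_term_def a'_def)
  qed
  finally show ?thesis
    unfolding transfer_bracket_def b_def a'_def by (simp only: sum.distrib sum_distrib_left)
qed

lemma pbracket_first_row:
  assumes "cmod \<beta> = 1" and "z \<noteq> w"
    and "\<And>a. f a = c1 * transfer (a(m := \<beta>)) (Suc m) z False False
                   + c2 * transfer (a(m := \<beta>)) (Suc m) z False True"
    and "\<And>a. g a = d1 * transfer (a(m := \<beta>)) (Suc m) w False False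
                   + d2 * transfer (a(m := \<beta>)) (Suc m) w False True"
  shows "pbracket (Suc m) f g \<alpha> = - \<i> * (c1 * d2 - c2 * d1)
    * (w * transfer (\<alpha>(m := \<beta>)) (Suc m) z False False * transfer (\<alpha>(m := \<beta>)) (Suc m) w False True
       - z * transfer (\<alpha>(m := \<beta>)) (Suc m) z False True * transfer (\<alpha>(m := \<beta>)) (Suc m) w False False)
    / (z - w)"
proof -
  have "(z - w) * pbracket (Suc m) f g \<alpha> = - \<i> * (c1 * d2 - c2 * d1)
    * (w * transfer (\<alpha>(m := \<beta>)) (Suc m) z False False * transfer (\<alpha>(m := \<beta>)) (Suc m) w False True
       - z * transfer (\<alpha>(m := \<beta>)) (Suc m) z False True * transfer (\<alpha>(m := \<beta>)) (Suc m) w False False)"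
    unfolding pbracket_first_row_entries[OF assms(1,3,4)] distrib_left mult.left_commute[of "z - w"]
      transfer_bracket_rmatrix
    by (simp add: rmatrix_bracket_def levi_civita_def algebra_simps del: transfer.simps)
  then show ?thesis
    using assms(2) by (metis mult.commute nonzero_eq_divide_eq right_minus_eq)
qed

lemma coeff_opuc_star: "coeff (opuc_star k p) i = (if i \<le> k then cnj (coeff p (k - i)) else 0)"
proof -
  have "coeff (opuc_star k p) i = (\<Sum>m\<le>k. if m = i then cnj (coeff p (k - m)) else 0)"
    unfolding opuc_star_def coeff_sum coeff_monom by (rule sum.cong) auto
  then show ?thesis
    by simp
qed

lemma degree_opuc_star: "degree (opuc_star k p) \<le> k"
  by (rule degree_le) (simp add: coeff_opuc_star)

lemma degree_Phi: "degree (Phi a k) \<le> k"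
proof (induction k)
  case 0
  show ?case by simp
next
  case (Suc k)
  have "degree (smult (cnj (a k)) (opuc_star k (Phi a k))) \<le> Suc k"
    using degree_opuc_star[of k "Phi a k"] degree_smult_le le_SucI order_trans by blast
  with Suc show ?case
    by (simp add: degree_diff_le)
qed

lemma opuc_star_Phi_Suc:
  "opuc_star (Suc k) (Phi a (Suc k)) = opuc_star k (Phi a k) - smult (a k) (pCons 0 (Phi a k))"
proof (rule poly_eqI)
  fix i
  have high: "coeff (Phi a k) i = 0" if "k < i" for i
    using that degree_Phi[of a k] by (simp add: coeff_eq_0)
  show "coeff (opuc_star (Suc k) (Phi a (Suc k))) i
      = coeff (opuc_star k (Phi a k) - smult (a k) (pCons 0 (Phi a k))) i"
  proof (cases i)
    case 0
    then show ?thesis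
      by (simp add: coeff_opuc_star)
  next
    case (Suc j)
    consider "j < k" | "j = k" | "k < j"
      by linarith
    then show ?thesis
    proof cases
      case 1
      then have "k - j = Suc (k - Suc j)"
        by simp
      with 1 Suc show ?thesis
        by (simp add: coeff_opuc_star)
    qed (simp_all add: Suc coeff_opuc_star high)
  qed
qed

lemma poly_Phi_transfer:
  "poly (Phi a k) z = transfer a k z False False + transfer a k z False True
   \<and> poly (opuc_star k (Phi a k)) z = transfer a k z True False + transfer a k z True True"
proof (induction k)
  case 0
  have "opuc_star 0 1 = 1"
    by (rule poly_eqI) (simp add: coeff_opuc_star coeff_1)
  then show ?case
    by simp
next
  case (Suc k)
  then show ?case
    unfolding opuc_star_Phi_Suc by (simp add: szego_matrix_def algebra_simps)
qed

lemma transfer_uminus: "transfer (\<lambda>j. - a j) k z p q = (if p = q then 1 else -1) * transfer a k z p q"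
  by (induction k arbitrary: p q) (auto simp: szego_matrix_def)

lemma poly_Psi_transfer:
  "poly (Psi a k) z = transfer a k z False False - transfer a k z False True
   \<and> poly (opuc_star k (Psi a k)) z = transfer a k z True True - transfer a k z True False"
  using poly_Phi_transfer[of "\<lambda>j. - a j" k z] unfolding Psi_def transfer_uminus by simp

lemma transfer_upd_last:
  "transfer (a(m := b)) (Suc m) z p q =
     szego_matrix (a(m := b)) m z p False * transfer a m z False q
   + szego_matrix (a(m := b)) m z p True * transfer a m z True q"
  by (simp add: transfer_upd_ge)

lemma poly_Pn_transfer:
  "poly (Pn (Suc m) \<beta> a) z
     = transfer (a(m := \<beta>)) (Suc m) z False False + transfer (a(m := \<beta>)) (Suc m) z False True"
  unfolding Pn_def transfer_upd_last using poly_Phi_transfer[of a m z]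
  by (simp add: szego_matrix_def algebra_simps)

lemma poly_Qn_transfer:
  "poly (Qn (Suc m) \<beta> a) z
     = transfer (a(m := \<beta>)) (Suc m) z False False - transfer (a(m := \<beta>)) (Suc m) z False True"
  unfolding Qn_def transfer_upd_last by (simp add: poly_Psi_transfer szego_matrix_def algebra_simps)

lemma poly_Cn_transfer: "poly (Cn (Suc m) \<beta> a) z = transfer (a(m := \<beta>)) (Suc m) z False False"
  unfolding Cn_def by (simp add: poly_Pn_transfer poly_Qn_transfer field_simps del: transfer.simps)

lemma poly_Sn_transfer: "poly (Sn (Suc m) \<beta> a) z = transfer (a(m := \<beta>)) (Suc m) z False True"
  unfolding Sn_def by (simp add: poly_Pn_transfer poly_Qn_transfer field_simps del: transfer.simps)

theorem theorem5p4:
  fixes n :: nat and \<beta> z w :: complex and \<alpha> :: "nat \<Rightarrow> complex"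
  assumes "n \<ge> 1" and "cmod \<beta> = 1" and "\<forall>j<n - 1. cmod (\<alpha> j) < 1"
  shows "pbracket n (\<lambda>a. poly (Cn n \<beta> a) z) (\<lambda>a. poly (Cn n \<beta> a) w) \<alpha> = 0
    \<and> pbracket n (\<lambda>a. poly (Sn n \<beta> a) z) (\<lambda>a. poly (Sn n \<beta> a) w) \<alpha> = 0
    \<and> (z \<noteq> w \<longrightarrow> pbracket n (\<lambda>a. poly (Cn n \<beta> a) z) (\<lambda>a. poly (Sn n \<beta> a) w) \<alpha>
         = - \<i> * (poly (Cn n \<beta> \<alpha>) z * w * poly (Sn n \<beta> \<alpha>) w
                  - poly (Cn n \<beta> \<alpha>) w * z * poly (Sn n \<beta> \<alpha>) z) / (z - w))
    \<and> pbracket n (\<lambda>a. poly (Pn n \<beta> a) z) (\<lambda>a. poly (Pn n \<beta> a) w) \<alpha> = 0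
    \<and> pbracket n (\<lambda>a. poly (Qn n \<beta> a) z) (\<lambda>a. poly (Qn n \<beta> a) w) \<alpha> = 0
    \<and> (z \<noteq> w \<longrightarrow> pbracket n (\<lambda>a. poly (Pn n \<beta> a) z) (\<lambda>a. poly (Qn n \<beta> a) w) \<alpha>
         = - (\<i> / 2) * ((poly (Pn n \<beta> \<alpha>) z * poly (Qn n \<beta> \<alpha>) w
                          - poly (Pn n \<beta> \<alpha>) w * poly (Qn n \<beta> \<alpha>) z) * (z + w) / (z - w)
                        - poly (Qn n \<beta> \<alpha>) z * poly (Qn n \<beta> \<alpha>) w
                        + poly (Pn n \<beta> \<alpha>) z * poly (Pn n \<beta> \<alpha>) w))"
proof (cases "z = w")
  case True
  then show ?thesis
    by (simp add: pbracket_self)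
next
  case False
  obtain m where n: "n = Suc m"
    using assms(1) by (cases n) auto
  have C: "poly (Cn (Suc m) \<beta> a) x = 1 * transfer (a(m := \<beta>)) (Suc m) x False False
                                      + 0 * transfer (a(m := \<beta>)) (Suc m) x False True" for a x
    by (simp add: poly_Cn_transfer del: transfer.simps)
  have S: "poly (Sn (Suc m) \<beta> a) x = 0 * transfer (a(m := \<beta>)) (Suc m) x False False
                                      + 1 * transfer (a(m := \<beta>)) (Suc m) x False True" for a x
    by (simp add: poly_Sn_transfer del: transfer.simps)
  have P: "poly (Pn (Suc m) \<beta> a) x = 1 * transfer (a(m := \<beta>)) (Suc m) x False False
                                      + 1 * transfer (a(m := \<beta>)) (Suc m) x False True" for a x
    by (simp add: poly_Pn_transfer del: transfer.simps)
  have Q: "poly (Qn (Suc m) \<beta> a) x = 1 * transfer (a(m := \<beta>)) (Suc m) x False False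
                                      + (- 1) * transfer (a(m := \<beta>)) (Suc m) x False True" for a x
    by (simp add: poly_Qn_transfer del: transfer.simps)
  note bracket = pbracket_first_row[OF assms(2) False]
  show ?thesis
    unfolding n bracket[OF C C] bracket[OF S S] bracket[OF C S] bracket[OF P P] bracket[OF Q Q]
      bracket[OF P Q]
    using False
    by (simp add: poly_Cn_transfer poly_Sn_transfer poly_Pn_transfer poly_Qn_transfer field_simps
        del: transfer.simps)
qed

end
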